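(* Let $p_{\pm1}:E\to E_{\pm1}$, $x\mapsto x_{\pm1}$, and $p^-:E\to E_1\oplus E_{-1}=E^-$, $x\mapsto x_1+x_{-1}=\frac12(x-\tau x)$. Then: (i) $p_{\pm1}(C)=\pm C_\pm$ and $p_{\pm1}(C^0)=\pm C^0_\pm\neq\emptyset$; (ii) $p^-(C)=C\cap E^-=C_+\oplus(-C_-)$ and $p^-(C^0)=C^0\cap E^-=C_+^0\oplus(-C_-^0)$; (iii) $C\subseteq C_+\oplus E_0\oplus(-C_-)$.
   Context: $E$ finite-dimensional real vector space; $h\in\mathrm{End}(E)$ diagonalizable with eigenvalues in $\{-1,0,1\}$, $E_j=\ker(h-j\,\mathrm{id})$, $x=x_1+x_0+x_{-1}$; $\tau=e^{\pi ih}$ ($\mathrm{id}$ on $E_0$, $-\mathrm{id}$ on $E_1\oplus E_{-1}$); $C\subseteq E$ pointed generating closed convex cone with $e^{th}C=C$ for all $t$ and $-\tau(C)=C$; $C^0$ interior of $C$; $C_\pm=\pm C\cap E_{\pm1}$ and $C_\pm^0$ their interiors relative to $E_{\pm1}$. *)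

theory Defs
  imports "HOL-Analysis.Analysis"
begin

definition eigsp :: "('a::real_vector \<Rightarrow> 'a) \<Rightarrow> real \<Rightarrow> 'a set" where
  "eigsp h j = {x. h x = j *\<^sub>R x}"

definition diag_h :: "('a::real_vector \<Rightarrow> 'a) \<Rightarrow> bool" where
  "diag_h h \<longleftrightarrow> linear h \<and>
     (\<forall>x. \<exists>a b c. a \<in> eigsp h 1 \<and> b \<in> eigsp h 0 \<and> c \<in> eigsp h (-1) \<and> x = a + b + c)"

definition decomp :: "('a::real_vector \<Rightarrow> 'a) \<Rightarrow> 'a \<Rightarrow> 'a \<times> 'a \<times> 'a" where
  "decomp h x = (THE (a, b, c). a \<in> eigsp h 1 \<and> b \<in> eigsp h 0 \<and> c \<in> eigsp h (-1) \<and> x = a + b + c)"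

definition p1 :: "('a::real_vector \<Rightarrow> 'a) \<Rightarrow> 'a \<Rightarrow> 'a" where
  "p1 h x = fst (decomp h x)"
definition p0 :: "('a::real_vector \<Rightarrow> 'a) \<Rightarrow> 'a \<Rightarrow> 'a" where
  "p0 h x = fst (snd (decomp h x))"
definition pm1 :: "('a::real_vector \<Rightarrow> 'a) \<Rightarrow> 'a \<Rightarrow> 'a" where
  "pm1 h x = snd (snd (decomp h x))"

definition pminus :: "('a::real_vector \<Rightarrow> 'a) \<Rightarrow> 'a \<Rightarrow> 'a" where
  "pminus h x = p1 h x + pm1 h x"

definition Eminus :: "('a::real_vector \<Rightarrow> 'a) \<Rightarrow> 'a set" where
  "Eminus h = {a + c | a c. a \<in> eigsp h 1 \<and> c \<in> eigsp h (-1)}"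

text \<open>tau = e^{pi i h}: identity on E_0, minus identity on E_1 (+) E_{-1}.\<close>
definition tau :: "('a::real_vector \<Rightarrow> 'a) \<Rightarrow> 'a \<Rightarrow> 'a" where
  "tau h x = p0 h x - p1 h x - pm1 h x"

definition expop :: "real \<Rightarrow> ('a::real_normed_vector \<Rightarrow> 'a) \<Rightarrow> 'a \<Rightarrow> 'a" where
  "expop t h x = (\<Sum>n. (t ^ n / fact n) *\<^sub>R (h ^^ n) x)"

definition Cplus :: "('a::real_vector \<Rightarrow> 'a) \<Rightarrow> 'a set \<Rightarrow> 'a set" where
  "Cplus h C = C \<inter> eigsp h 1"
definition Cminus :: "('a::real_vector \<Rightarrow> 'a) \<Rightarrow> 'a set \<Rightarrow> 'a set" where
  "Cminus h C = uminus ` C \<inter> eigsp h (-1)"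

end

theory Submission
  imports Defs
begin

(*
  The flow e^{th} x = e^t x_1 + x_0 + e^{-t} x_{-1} preserves the closed cone C, so rescaling by
  e^{-|t|} and letting t tend to \<plusminus>\<infinity> puts x_1 and x_{-1} into C for every x \<in> C; and p^- x is the
  midpoint of x and -\<tau> x, so it stays in C, resp. C^0. Hence p_1, p_{-1} and p^- are linear
  projections mapping C into itself, which gives the images of C. A projection P onto a subspace S
  with P(C) \<subseteq> C maps C^0 onto the interior of C \<inter> S relative to S: a point y of that relative
  interior can be moved to y - \<epsilon> P c \<in> C for a fixed c \<in> C^0, and y = P (y - \<epsilon> P c + \<epsilon> c) with
  y - \<epsilon> P c + \<epsilon> c \<in> C + C^0 \<subseteq> C^0. The interior C^0 is non-empty because C is generating.
*)

lemma projection_image_eq_Int: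
  assumes "P ` A \<subseteq> A" "range P \<subseteq> S" "\<And>x. x \<in> S \<Longrightarrow> P x = x"
  shows "P ` A = A \<inter> S"
  using assms by force

lemma convex_cone_add_interior:
  fixes C :: "'a::real_normed_vector set"
  assumes "convex C" "cone C" "x \<in> C" "u \<in> interior C"
  shows "x + u \<in> interior C"
proof -
  have "(+) x ` C \<subseteq> C"
    using assms(1-3) convex_cone by blast
  then have "(+) x ` interior C \<subseteq> interior C"
    by (metis interior_mono interior_translation)
  then show ?thesis
    using assms(4) by blast
qed

lemma cone_scaleR_interior:
  fixes C :: "'a::real_normed_vector set"
  assumes "cone C" "c > 0" "u \<in> interior C"
  shows "c *\<^sub>R u \<in> interior C"
proof -
  have "(*\<^sub>R) c ` interior C \<subseteq> interior C"
  proof (rule interior_maximal)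
    show "(*\<^sub>R) c ` interior C \<subseteq> C"
      using assms(1,2) interior_subset unfolding cone_def by fastforce
  qed (use assms(2) in auto)
  then show ?thesis
    using assms(3) by blast
qed

lemma convex_interior_nonempty_if_span_UNIV:
  fixes C :: "'a::euclidean_space set"
  assumes "convex C" "0 \<in> C" "span C = UNIV"
  shows "interior C \<noteq> {}"
proof -
  have "affine hull C = UNIV"
    using assms(2,3) by (simp add: affine_hull_span_0 hull_inc)
  then have "interior C = rel_interior C"
    by (simp add: rel_interior_interior)
  then show ?thesis
    using assms(1,2) rel_interior_eq_empty by auto
qed

lemma eventually_at_right_diff_in_interior_of:
  fixes y q :: "'a::real_normed_vector"
  assumes "y \<in> top_of_set S interior_of A" "subspace S" "q \<in> S"
  shows "\<forall>\<^sub>F \<epsilon> in at_right 0. y - \<epsilon> *\<^sub>R q \<in> A"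
proof -
  obtain U where U: "open U" "y \<in> S \<inter> U" "S \<inter> U \<subseteq> A"
    using assms(1) unfolding interior_of_def openin_open by blast
  have "((\<lambda>\<epsilon>. y - \<epsilon> *\<^sub>R q) \<longlongrightarrow> y - 0 *\<^sub>R q) (at_right 0)"
    by (intro tendsto_intros)
  then have near: "\<forall>\<^sub>F \<epsilon> in at_right 0. y - \<epsilon> *\<^sub>R q \<in> U"
    using U(1,2) by (intro topological_tendstoD) auto
  have "y - \<epsilon> *\<^sub>R q \<in> S" for \<epsilon>
    using U(2) assms(2,3) by (simp add: subspace_diff subspace_scale)
  then show ?thesis
    using U(3) by (blast intro: eventually_mono[OF near])
qed

lemma uminus_interior_of:
  fixes S :: "'a::real_normed_vector set"
  assumes "subspace S" "A \<subseteq> S"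
  shows "uminus ` (top_of_set S interior_of A) = top_of_set S interior_of (uminus ` A)"
proof -
  have "continuous_map (top_of_set S) (top_of_set S) uminus"
    using assms(1) by (simp add: continuous_on_minus continuous_on_id subspace_neg Pi_iff)
  then have "homeomorphic_map (top_of_set S) (top_of_set S) uminus"
    by (rule homeomorphic_map_involution) simp
  then show ?thesis
    using assms(2) by (simp add: homeomorphic_map_interior_of)
qed

lemma linear_projection_image_interior:
  fixes C :: "'a::real_normed_vector set"
  assumes cone: "convex C" "cone C" "interior C \<noteq> {}"
    and P: "linear P" "subspace S" "range P \<subseteq> S" "\<And>x. x \<in> S \<Longrightarrow> P x = x" "P ` C \<subseteq> C"
  shows "P ` interior C = top_of_set S interior_of (C \<inter> S)"
proof (intro set_eqI iffI)
  fix y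
  assume "y \<in> P ` interior C"
  then obtain u where u: "u \<in> interior C" "y = P u"
    by blast
  then obtain r where r: "r > 0" "ball u r \<subseteq> C"
    using mem_interior by blast
  have "S \<inter> ball y r \<subseteq> C \<inter> S"
  proof
    fix z
    assume z: "z \<in> S \<inter> ball y r"
    then have "u + (z - y) \<in> C"
      using r(2) by (auto simp: dist_norm norm_minus_commute)
    then have "P (u + (z - y)) \<in> C"
      using P(5) by blast
    moreover have "P (u + (z - y)) = z"
    proof -
      have "P y = y" "P z = z"
        using u z P(3,4) by auto
      then show ?thesis
        using u(2) by (simp add: linear_add[OF P(1)] linear_diff[OF P(1)])
    qed
    ultimately show "z \<in> C \<inter> S"
      using z by simp
  qed
  moreover have "y \<in> S \<inter> ball y r"
    using u P(3) r by auto
  moreover have "openin (top_of_set S) (S \<inter> ball y r)"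
    by (simp add: openin_open_Int)
  ultimately show "y \<in> top_of_set S interior_of (C \<inter> S)"
    unfolding interior_of_def by blast
next
  fix y
  assume y: "y \<in> top_of_set S interior_of (C \<inter> S)"
  obtain c where c: "c \<in> interior C"
    using cone(3) by blast
  have "\<forall>\<^sub>F \<epsilon> in at_right 0. 0 < \<epsilon> \<and> y - \<epsilon> *\<^sub>R P c \<in> C \<inter> S"
    using P(3) by (intro eventually_conj eventually_at_right_less
        eventually_at_right_diff_in_interior_of[OF y P(2)]) auto
  then obtain \<epsilon> where \<epsilon>: "0 < \<epsilon>" "y - \<epsilon> *\<^sub>R P c \<in> C \<inter> S"
    using eventually_happens'[OF trivial_limit_at_right_real] by blast
  have "(y - \<epsilon> *\<^sub>R P c) + \<epsilon> *\<^sub>R c \<in> interior C"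
    using \<epsilon> c cone by (intro convex_cone_add_interior cone_scaleR_interior) auto
  moreover have "P ((y - \<epsilon> *\<^sub>R P c) + \<epsilon> *\<^sub>R c) = y"
  proof -
    have "y \<in> S"
      using y interior_of_subset_topspace by fastforce
    then have "P y = y" "P (P c) = P c"
      using P(3,4) by auto
    then show ?thesis
      by (simp add: linear_add[OF P(1)] linear_diff[OF P(1)] linear_scale[OF P(1)])
  qed
  ultimately show "y \<in> P ` interior C"
    by (metis image_eqI)
qed

lemma eigsp_subspace: "linear h \<Longrightarrow> subspace (eigsp h j)"
  by (auto simp: subspace_def eigsp_def linear_0 linear_add linear_scale scaleR_add_right)

locale eigen_decomposition =
  fixes h :: "'a::real_vector \<Rightarrow> 'a"
  assumes diag: "diag_h h"
begin

lemma linear_h: "linear h"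
  using diag by (simp add: diag_h_def)

lemma eigen_sum_eq_0D:
  assumes "a \<in> eigsp h 1" "b \<in> eigsp h 0" "c \<in> eigsp h (-1)" "a + b + c = 0"
  shows "a = 0" "b = 0" "c = 0"
proof -
  have h: "h a = a" "h b = 0" "h c = - c"
    using assms(1-3) by (auto simp: eigsp_def)
  have "a - c = h (a + b + c)"
    using h by (simp add: linear_add[OF linear_h])
  then have ac: "a - c = 0"
    using assms(4) by (simp add: linear_0[OF linear_h])
  have "a + c = h (a - c)"
    using h by (simp add: linear_diff[OF linear_h])
  then have "a + c = 0"
    using ac by (simp add: linear_0[OF linear_h])
  moreover have "c = a"
    using ac by simp
  ultimately have "2 *\<^sub>R a = 0"
    by (simp add: scaleR_2)
  with \<open>c = a\<close> show "a = 0" "c = 0"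
    by simp_all
  with assms(4) show "b = 0"
    by simp
qed

lemma eigen_components:
  assumes "a \<in> eigsp h 1" "b \<in> eigsp h 0" "c \<in> eigsp h (-1)" "x = a + b + c"
  shows "p1 h x = a" "p0 h x = b" "pm1 h x = c"
proof -
  have "decomp h x = (a, b, c)"
    unfolding decomp_def
  proof (rule the_equality)
    fix y
    assume "case y of (a', b', c') \<Rightarrow>
      a' \<in> eigsp h 1 \<and> b' \<in> eigsp h 0 \<and> c' \<in> eigsp h (-1) \<and> x = a' + b' + c'"
    then obtain a' b' c' where y: "y = (a', b', c')" "a' \<in> eigsp h 1" "b' \<in> eigsp h 0"
        "c' \<in> eigsp h (-1)" "x = a' + b' + c'"
      by (cases y) auto
    have "(a' - a) + (b' - b) + (c' - c) = 0"
      using y(5) assms(4) by (simp add: algebra_simps)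
    then have "a' - a = 0" "b' - b = 0" "c' - c = 0"
      using eigen_sum_eq_0D y(2-4) assms(1-3) eigsp_subspace[OF linear_h]
      by (meson subspace_diff)+
    with y(1) show "y = (a, b, c)"
      by simp
  qed (use assms in simp)
  then show "p1 h x = a" "p0 h x = b" "pm1 h x = c"
    by (simp_all add: p1_def p0_def pm1_def)
qed

lemma eigen_components_mem: "p1 h x \<in> eigsp h 1" "p0 h x \<in> eigsp h 0" "pm1 h x \<in> eigsp h (-1)"
  and eigen_components_sum: "p1 h x + p0 h x + pm1 h x = x"
proof -
  obtain a b c where "a \<in> eigsp h 1" "b \<in> eigsp h 0" "c \<in> eigsp h (-1)" "x = a + b + c"
    using diag unfolding diag_h_def by blast
  then show "p1 h x \<in> eigsp h 1" "p0 h x \<in> eigsp h 0" "pm1 h x \<in> eigsp h (-1)"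
      "p1 h x + p0 h x + pm1 h x = x"
    using eigen_components by auto
qed

lemma linear_eigen_components: "linear (p1 h)" "linear (p0 h)" "linear (pm1 h)"
proof -
  note mem = eigen_components_mem and subsp = eigsp_subspace[OF linear_h]
  have "x + y = (p1 h x + p1 h y) + (p0 h x + p0 h y) + (pm1 h x + pm1 h y)" for x y
  proof -
    have "x + y = (p1 h x + p0 h x + pm1 h x) + (p1 h y + p0 h y + pm1 h y)"
      by (simp only: eigen_components_sum)
    then show ?thesis
      by (simp add: algebra_simps)
  qed
  note add = eigen_components[OF subspace_add[OF subsp mem(1) mem(1)]
      subspace_add[OF subsp mem(2) mem(2)] subspace_add[OF subsp mem(3) mem(3)] this]
  have "r *\<^sub>R x = r *\<^sub>R p1 h x + r *\<^sub>R p0 h x + r *\<^sub>R pm1 h x" for r x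
    by (metis eigen_components_sum scaleR_add_right)
  note scale = eigen_components[OF subspace_scale[OF subsp mem(1)]
      subspace_scale[OF subsp mem(2)] subspace_scale[OF subsp mem(3)] this]
  show "linear (p1 h)" "linear (p0 h)" "linear (pm1 h)"
    by (simp_all add: linearI add scale)
qed

lemma p1_eigsp: "x \<in> eigsp h 1 \<Longrightarrow> p1 h x = x"
  and pm1_eigsp: "x \<in> eigsp h (-1) \<Longrightarrow> pm1 h x = x"
  using eigen_components[of x 0 0 x] eigen_components[of 0 0 x x]
    subspace_0[OF eigsp_subspace[OF linear_h]] by auto

lemma pminus_mem_Eminus: "pminus h x \<in> Eminus h"
  using eigen_components_mem unfolding pminus_def Eminus_def by blast

lemma pminus_Eminus: "x \<in> Eminus h \<Longrightarrow> pminus h x = x"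
  using eigen_components subspace_0[OF eigsp_subspace[OF linear_h]]
  by (fastforce simp: Eminus_def pminus_def)

lemma funpow_h_eq:
  "(h ^^ n) x = p1 h x + (if n = 0 then p0 h x else 0) + (-1) ^ n *\<^sub>R pm1 h x"
proof (induction n)
  case 0
  then show ?case
    using eigen_components_sum[of x] by simp
next
  case (Suc n)
  have "h (p1 h x) = p1 h x" "h (p0 h x) = 0" "h (pm1 h x) = - pm1 h x"
    using eigen_components_mem[of x] by (auto simp: eigsp_def)
  then show ?case
    unfolding Suc funpow.simps comp_apply
    by (simp add: linear_add[OF linear_h] linear_scale[OF linear_h] linear_0[OF linear_h])
qed

lemma minus_tau_eigen_components: "p1 h (- tau h x) = p1 h x" "p0 h (- tau h x) = - p0 h x"
    "pm1 h (- tau h x) = pm1 h x"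
proof -
  have "- tau h x = p1 h x + - p0 h x + pm1 h x"
    by (simp add: tau_def)
  then show "p1 h (- tau h x) = p1 h x" "p0 h (- tau h x) = - p0 h x" "pm1 h (- tau h x) = pm1 h x"
    by (rule eigen_components[OF eigen_components_mem(1)
          subspace_neg[OF eigsp_subspace[OF linear_h] eigen_components_mem(2)] eigen_components_mem(3)])+
qed

lemma linear_minus_tau: "linear (\<lambda>x. - tau h x)"
  unfolding tau_def using linear_eigen_components
  by (intro linear_compose_neg linear_compose_sub) auto

lemma minus_tau_involution: "- tau h (- tau h x) = x"
proof -
  have minus_tau: "- tau h y = p1 h y + pm1 h y - p0 h y" for y
    by (simp add: tau_def)
  show ?thesis
    unfolding minus_tau[of "- tau h x"] minus_tau_eigen_components
    using eigen_components_sum[of x] by (simp add: algebra_simps)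
qed

lemma pminus_midpoint: "pminus h x = (1/2) *\<^sub>R x + (1/2) *\<^sub>R (- tau h x)"
proof -
  have "x + - tau h x = 2 *\<^sub>R pminus h x"
    using eigen_components_sum[of x] by (simp add: tau_def pminus_def scaleR_2 algebra_simps)
  then have "pminus h x = (1/2) *\<^sub>R (x + - tau h x)"
    by simp
  then show ?thesis
    by (simp only: scaleR_add_right)
qed

lemma pminus_mem_if_reflection_invariant:
  assumes "convex A" "(\<lambda>x. - tau h x) ` A = A" "x \<in> A"
  shows "pminus h x \<in> A"
  unfolding pminus_midpoint using assms by (intro convexD) auto

lemma uminus_Cminus: "uminus ` Cminus h C = C \<inter> eigsp h (-1)"
  using subspace_neg[OF eigsp_subspace[OF linear_h]] by (force simp: Cminus_def)

end

lemma expop_eigen_components: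
  fixes h :: "'a::real_normed_vector \<Rightarrow> 'a"
  assumes "diag_h h"
  shows "expop t h x = exp t *\<^sub>R p1 h x + p0 h x + exp (- t) *\<^sub>R pm1 h x"
proof -
  interpret eigen_decomposition h
    using assms by unfold_locales
  have "(\<lambda>n. (t ^ n / fact n) *\<^sub>R p1 h x) sums (exp t *\<^sub>R p1 h x)"
    using sums_scaleR_left[OF exp_converges[of t]] by (simp add: divide_inverse mult.commute)
  moreover have "(\<lambda>n. (t ^ n / fact n) *\<^sub>R (if n = 0 then p0 h x else 0)) sums p0 h x"
    using sums_single[of 0 "\<lambda>_. p0 h x"] by (simp add: if_distrib cong: if_cong)
  moreover have "(\<lambda>n. (t ^ n / fact n) *\<^sub>R ((-1) ^ n *\<^sub>R pm1 h x)) sums (exp (- t) *\<^sub>R pm1 h x)"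
    using sums_scaleR_left[OF exp_converges[of "- t"], of "pm1 h x"]
    by (simp add: divide_inverse mult_ac power_minus')
  ultimately have "(\<lambda>n. (t ^ n / fact n) *\<^sub>R (h ^^ n) x)
      sums (exp t *\<^sub>R p1 h x + p0 h x + exp (- t) *\<^sub>R pm1 h x)"
    unfolding funpow_h_eq scaleR_add_right by (intro sums_add)
  then show ?thesis
    unfolding expop_def by (rule sums_unique[symmetric])
qed

locale invariant_cone = eigen_decomposition h for h :: "'a::euclidean_space \<Rightarrow> 'a" +
  fixes C :: "'a set"
  assumes closed_C: "closed C" and convex_C: "convex C" and cone_C: "cone C"
    and generating: "\<forall>x. \<exists>a\<in>C. \<exists>b\<in>C. x = a - b"
    and expop_invariant: "\<forall>t. expop t h ` C = C"
    and reflection_invariant: "(\<lambda>x. - tau h x) ` C = C"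
begin

lemma interior_C_nonempty: "interior C \<noteq> {}"
proof (rule convex_interior_nonempty_if_span_UNIV[OF convex_C])
  show "0 \<in> C"
    using generating cone_C unfolding cone_def by (metis scaleR_zero_left order_refl)
  have "x \<in> span C" for x
    using generating by (metis span_base span_diff)
  then show "span C = UNIV"
    by auto
qed

lemma eigen_components_in_C:
  assumes "x \<in> C"
  shows "p1 h x \<in> C" "pm1 h x \<in> C"
proof -
  have "expop s h x \<in> C" for s
    using assms expop_invariant by blast
  then have in_C: "exp (- t) *\<^sub>R expop s h x \<in> C" for s t
    using cone_C unfolding cone_def by simp
  have lim_in_C: "y \<in> C" if "((\<lambda>t. exp (- t) *\<^sub>R expop (s t) h x) \<longlongrightarrow> y) at_top" for s y
    by (rule Lim_in_closed_set[OF closed_C _ _ that]) (simp_all add: in_C)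
  have exp_neg: "((\<lambda>t::real. exp (- t)) \<longlongrightarrow> 0) at_top"
    by (rule filterlim_compose[OF exp_at_bot filterlim_uminus_at_bot_at_top])
  have "((\<lambda>t. a + exp (- t) *\<^sub>R b + (exp (- t) * exp (- t)) *\<^sub>R c) \<longlongrightarrow> a + 0 *\<^sub>R b + (0 * 0) *\<^sub>R c)
      at_top" for a b c :: 'a
    by (intro tendsto_intros exp_neg)
  then have decay: "((\<lambda>t. a + exp (- t) *\<^sub>R b + (exp (- t) * exp (- t)) *\<^sub>R c) \<longlongrightarrow> a) at_top"
    for a b c :: 'a
    by simp
  have "exp (- t) *\<^sub>R expop t h x
      = p1 h x + exp (- t) *\<^sub>R p0 h x + (exp (- t) * exp (- t)) *\<^sub>R pm1 h x" for t
    using diag by (simp add: expop_eigen_components scaleR_add_right exp_minus field_simps)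
  then show "p1 h x \<in> C"
    using lim_in_C[of "\<lambda>t. t"] decay by simp
  have "exp (- t) *\<^sub>R expop (- t) h x
      = pm1 h x + exp (- t) *\<^sub>R p0 h x + (exp (- t) * exp (- t)) *\<^sub>R p1 h x" for t
    using diag by (simp add: expop_eigen_components scaleR_add_right exp_minus field_simps)
  then show "pm1 h x \<in> C"
    using lim_in_C[of "\<lambda>t. - t"] decay by simp
qed

lemma add_in_C: "x \<in> C \<Longrightarrow> y \<in> C \<Longrightarrow> x + y \<in> C"
  using convex_C cone_C convex_cone by blast

lemma interior_reflection_invariant: "(\<lambda>x. - tau h x) ` interior C = interior C"
proof -
  have "inj (\<lambda>x. - tau h x)"
    by (metis injI minus_tau_involution)
  then show ?thesis
    using interior_injective_linear_image[OF linear_minus_tau] reflection_invariant by metis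
qed

lemma pminus_in_C: "x \<in> C \<Longrightarrow> pminus h x \<in> C"
  by (rule pminus_mem_if_reflection_invariant[OF convex_C reflection_invariant])

lemma pminus_in_interior: "x \<in> interior C \<Longrightarrow> pminus h x \<in> interior C"
  by (rule pminus_mem_if_reflection_invariant[OF convex_interior[OF convex_C]
        interior_reflection_invariant])

lemma image_p1: "p1 h ` C = Cplus h C"
  unfolding Cplus_def
  by (rule projection_image_eq_Int) (auto simp: eigen_components_in_C eigen_components_mem p1_eigsp)

lemma image_pm1: "pm1 h ` C = uminus ` Cminus h C"
  unfolding uminus_Cminus
  by (rule projection_image_eq_Int) (auto simp: eigen_components_in_C eigen_components_mem pm1_eigsp)

lemma image_p1_interior: "p1 h ` interior C = top_of_set (eigsp h 1) interior_of Cplus h C"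
  unfolding Cplus_def
  by (rule linear_projection_image_interior[OF convex_C cone_C interior_C_nonempty
        linear_eigen_components(1) eigsp_subspace[OF linear_h]])
    (auto simp: eigen_components_in_C eigen_components_mem p1_eigsp)

lemma uminus_interior_of_Cminus:
  "uminus ` (top_of_set (eigsp h (-1)) interior_of Cminus h C)
    = top_of_set (eigsp h (-1)) interior_of (C \<inter> eigsp h (-1))"
  unfolding uminus_Cminus[symmetric]
  by (rule uminus_interior_of[OF eigsp_subspace[OF linear_h]]) (auto simp: Cminus_def)

lemma image_pm1_interior:
  "pm1 h ` interior C = uminus ` (top_of_set (eigsp h (-1)) interior_of Cminus h C)"
  unfolding uminus_interior_of_Cminus
  by (rule linear_projection_image_interior[OF convex_C cone_C interior_C_nonempty
        linear_eigen_components(3) eigsp_subspace[OF linear_h]])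
    (auto simp: eigen_components_in_C eigen_components_mem pm1_eigsp)

lemma interior_of_Cplus_nonempty: "top_of_set (eigsp h 1) interior_of Cplus h C \<noteq> {}"
  using image_p1_interior interior_C_nonempty by auto

lemma interior_of_Cminus_nonempty: "top_of_set (eigsp h (-1)) interior_of Cminus h C \<noteq> {}"
  using image_pm1_interior interior_C_nonempty by auto

lemma image_pminus: "pminus h ` C = C \<inter> Eminus h"
  by (rule projection_image_eq_Int) (auto simp: pminus_in_C pminus_mem_Eminus pminus_Eminus)

lemma image_pminus_interior: "pminus h ` interior C = interior C \<inter> Eminus h"
  by (rule projection_image_eq_Int) (auto simp: pminus_in_interior pminus_mem_Eminus pminus_Eminus)

lemma C_Int_Eminus: "C \<inter> Eminus h = {a + b | a b. a \<in> Cplus h C \<and> b \<in> uminus ` Cminus h C}"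
proof (intro set_eqI iffI)
  fix y
  assume y: "y \<in> C \<inter> Eminus h"
  then have "p1 h y \<in> Cplus h C" "pm1 h y \<in> uminus ` Cminus h C"
    using image_p1 image_pm1 by blast+
  moreover have "y = p1 h y + pm1 h y"
    using pminus_Eminus y by (simp add: pminus_def)
  ultimately show "y \<in> {a + b | a b. a \<in> Cplus h C \<and> b \<in> uminus ` Cminus h C}"
    by blast
next
  fix y
  assume "y \<in> {a + b | a b. a \<in> Cplus h C \<and> b \<in> uminus ` Cminus h C}"
  then obtain a b where "y = a + b" "a \<in> C \<inter> eigsp h 1" "b \<in> C \<inter> eigsp h (-1)"
    unfolding uminus_Cminus Cplus_def by blast
  moreover have "a + b \<in> C"
    using calculation add_in_C by blast
  ultimately show "y \<in> C \<inter> Eminus h"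
    unfolding Eminus_def by blast
qed

lemma interior_Int_Eminus:
  "interior C \<inter> Eminus h =
    {a + b | a b. a \<in> top_of_set (eigsp h 1) interior_of Cplus h C
      \<and> b \<in> uminus ` (top_of_set (eigsp h (-1)) interior_of Cminus h C)}"
proof (intro set_eqI iffI)
  fix y
  assume y: "y \<in> interior C \<inter> Eminus h"
  then have "p1 h y \<in> top_of_set (eigsp h 1) interior_of Cplus h C"
      "pm1 h y \<in> uminus ` (top_of_set (eigsp h (-1)) interior_of Cminus h C)"
    using image_p1_interior image_pm1_interior by blast+
  moreover have "y = p1 h y + pm1 h y"
    using pminus_Eminus y by (simp add: pminus_def)
  ultimately show "y \<in> {a + b | a b. a \<in> top_of_set (eigsp h 1) interior_of Cplus h C
      \<and> b \<in> uminus ` (top_of_set (eigsp h (-1)) interior_of Cminus h C)}"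
    by blast
next
  fix y
  assume "y \<in> {a + b | a b. a \<in> top_of_set (eigsp h 1) interior_of Cplus h C
      \<and> b \<in> uminus ` (top_of_set (eigsp h (-1)) interior_of Cminus h C)}"
  then obtain a b where y: "y = a + b" and a: "a \<in> top_of_set (eigsp h 1) interior_of (C \<inter> eigsp h 1)"
      and b: "b \<in> top_of_set (eigsp h (-1)) interior_of (C \<inter> eigsp h (-1))"
    unfolding Cplus_def uminus_interior_of_Cminus by blast
  obtain c where c: "c \<in> interior C"
    using interior_C_nonempty by blast
  have "\<forall>\<^sub>F \<epsilon> in at_right 0. 0 < \<epsilon> \<and> a - \<epsilon> *\<^sub>R p1 h c \<in> C \<and> b - \<epsilon> *\<^sub>R pm1 h c \<in> C"
    using eigsp_subspace[OF linear_h] eigen_components_mem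
    by (intro eventually_conj eventually_at_right_less
        eventually_mono[OF eventually_at_right_diff_in_interior_of[OF a]]
        eventually_mono[OF eventually_at_right_diff_in_interior_of[OF b]]) auto
  then obtain \<epsilon> where \<epsilon>: "0 < \<epsilon>" "a - \<epsilon> *\<^sub>R p1 h c \<in> C" "b - \<epsilon> *\<^sub>R pm1 h c \<in> C"
    using eventually_happens'[OF trivial_limit_at_right_real] by blast
  have "(a - \<epsilon> *\<^sub>R p1 h c) + (b - \<epsilon> *\<^sub>R pm1 h c) + \<epsilon> *\<^sub>R pminus h c \<in> interior C"
    using \<epsilon> by (intro convex_cone_add_interior[OF convex_C cone_C] add_in_C
        cone_scaleR_interior[OF cone_C] pminus_in_interior c)
  moreover have "(a - \<epsilon> *\<^sub>R p1 h c) + (b - \<epsilon> *\<^sub>R pm1 h c) + \<epsilon> *\<^sub>R pminus h c = y"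
    unfolding y pminus_def by (simp add: algebra_simps)
  moreover have "y \<in> Eminus h"
    using y a b interior_of_subset_topspace unfolding Eminus_def by fastforce
  ultimately show "y \<in> interior C \<inter> Eminus h"
    by simp
qed

lemma C_subset_eigen_sum:
  "C \<subseteq> {a + b + c | a b c. a \<in> Cplus h C \<and> b \<in> eigsp h 0 \<and> c \<in> uminus ` Cminus h C}"
proof
  fix x
  assume "x \<in> C"
  then have "p1 h x \<in> Cplus h C" "pm1 h x \<in> uminus ` Cminus h C"
    using image_p1 image_pm1 by blast+
  then show "x \<in> {a + b + c | a b c. a \<in> Cplus h C \<and> b \<in> eigsp h 0 \<and> c \<in> uminus ` Cminus h C}"
    using eigen_components_mem(2)[of x] eigen_components_sum[of x, symmetric] by blast
qed

end

theorem lemma3p2: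
  fixes h :: "'a::euclidean_space \<Rightarrow> 'a" and C :: "'a set"
  assumes diag: "diag_h h"
    and closedC: "closed C" and convexC: "convex C" and coneC: "cone C"
    and pointed: "C \<inter> uminus ` C = {0}"
    and generating: "\<forall>x. \<exists>a\<in>C. \<exists>b\<in>C. x = a - b"
    and inv_exp: "\<forall>t. expop t h ` C = C"
    and inv_tau: "(\<lambda>x. - tau h x) ` C = C"
  shows
    "(p1 h ` C = Cplus h C \<and> pm1 h ` C = uminus ` Cminus h C
     \<and> p1 h ` interior C = (top_of_set (eigsp h 1)) interior_of (Cplus h C)
     \<and> pm1 h ` interior C = uminus ` ((top_of_set (eigsp h (-1))) interior_of (Cminus h C))
     \<and> (top_of_set (eigsp h 1)) interior_of (Cplus h C) \<noteq> {}
     \<and> (top_of_set (eigsp h (-1))) interior_of (Cminus h C) \<noteq> {})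
    \<and> (pminus h ` C = C \<inter> Eminus h
     \<and> C \<inter> Eminus h = {a + b | a b. a \<in> Cplus h C \<and> b \<in> uminus ` Cminus h C}
     \<and> pminus h ` interior C = interior C \<inter> Eminus h
     \<and> interior C \<inter> Eminus h =
         {a + b | a b. a \<in> (top_of_set (eigsp h 1)) interior_of (Cplus h C)
                   \<and> b \<in> uminus ` ((top_of_set (eigsp h (-1))) interior_of (Cminus h C))})
    \<and> C \<subseteq> {a + b + c | a b c. a \<in> Cplus h C \<and> b \<in> eigsp h 0 \<and> c \<in> uminus ` Cminus h C}"
proof -
  interpret invariant_cone h C
    using diag closedC convexC coneC generating inv_exp inv_tau by unfold_locales
  show ?thesis
    by (intro conjI image_p1 image_pm1 image_p1_interior image_pm1_interior
        interior_of_Cplus_nonempty interior_of_Cminus_nonempty image_pminus C_Int_Eminus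
        image_pminus_interior interior_Int_Eminus C_subset_eigen_sum)
qed

end
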